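(* Consider any sequences $\{(x_k,y_k,\gamma_k)\}_{k\ge0}$, $\{(\tilde x_k,u_k,\tilde\gamma_k)\}_{k\ge1}$ generated by the inexact symmetric proximal ADMM described in the context. Then for every $k\ge1$: $$G(x_{k-1}-x_k)\in\partial f(\tilde x_k)-A^*\tilde\gamma_k,$$ $$\Big(H+\tfrac{(\tau-\tau\theta+\theta)\beta}{\tau+\theta}B^*B\Big)(y_{k-1}-y_k)-\tfrac{\tau}{\tau+\theta}B^*(\gamma_{k-1}-\gamma_k)\in\partial g(y_k)-B^*\tilde\gamma_k,$$ $$-\tfrac{\tau}{\tau+\theta}B(y_{k-1}-y_k)+\tfrac{1}{(\tau+\theta)\beta}(\gamma_{k-1}-\gamma_k)=A\tilde x_k+By_k-b.$$ As a consequence, $M(z_{k-1}-z_k)\in T(\tilde z_k)$ for every $k\ge1$, where $z_k=(x_k,y_k,\gamma_k)$ for $k\ge0$ and $\tilde z_k=(\tilde x_k,y_k,\tilde\gamma_k)$ for $k\ge1$.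
   Context: Let $f:\mathbb{R}^n\to(-\infty,\infty]$ and $g:\mathbb{R}^p\to(-\infty,\infty]$ be proper closed convex functions, $A\in\mathbb{R}^{m\times n}$, $B\in\mathbb{R}^{m\times p}$, $b\in\mathbb{R}^m$ (problem: $\min\{f(x)+g(y):Ax+By=b\}$). Standing assumption: there exists $(x^*,y^*,\gamma^* )$ solving the Lagrangian system $0\in\partial f(x)-A^*\gamma$, $0\in\partial g(y)-B^*\gamma$, $0=Ax+By-b$. Here $\partial$ is the subdifferential, $A^*$ the transpose, $\mathbb{S}^n_{++}$ ($\mathbb{S}^p_+$) the symmetric positive definite (semidefinite) matrices, and $\|z\|_Q=\sqrt{\langle Qz,z\rangle}$ for $Q$ positive semidefinite. Algorithm (inexact symmetric proximal ADMM): given $(x_0,y_0,\gamma_0)\in\mathbb{R}^n\times\mathbb{R}^p\times\mathbb{R}^m$, $\beta>0$, $\tilde\sigma,\hat\sigma\in[0,1)$, $G\in\mathbb{S}^n_{++}$, $H\in\mathbb{S}^p_+$, and $(\tau,\theta)\in\mathcal R_{\tilde\sigma}:=\{(\tau,\theta):\tau\in(-1,1-\tilde\sigma),\ \tau+\theta>0,\ (1-\tau^2)(2-\tau-\theta-\tilde\sigma)-(1-\theta)^2(1-\tau-\tilde\sigma)>0\}$. For $k=1,2,\dots$: compute $(\tilde x_k,u_k)$ with $u_k\in\partial f(\tilde x_k)-A^*\tilde\gamma_k$ and $\|\tilde x_k-x_{k-1}+G^{-1}u_k\|_G^2\le\frac{\tilde\sigma}{\beta}\|\tilde\gamma_k-\gamma_{k-1}\|^2+\hat\sigma\|\tilde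 x_k-x_{k-1}\|_G^2$, where $\tilde\gamma_k=\gamma_{k-1}-\beta(A\tilde x_k+By_{k-1}-b)$; set $\gamma_{k-1/2}=\gamma_{k-1}-\tau\beta(A\tilde x_k+By_{k-1}-b)$; let $y_k$ be an optimal solution of $\min_y\{g(y)-\langle\gamma_{k-1/2},By\rangle+\frac\beta2\|A\tilde x_k+By-b\|^2+\frac12\|y-y_{k-1}\|_H^2\}$; set $x_k=x_{k-1}-G^{-1}u_k$ and $\gamma_k=\gamma_{k-1/2}-\theta\beta(A\tilde x_k+By_k-b)$. Definitions: $T(x,y,\gamma)=(\partial f(x)-A^*\gamma,\ \partial g(y)-B^*\gamma,\ Ax+By-b)$ (a set-valued operator on $\mathbb{R}^n\times\mathbb{R}^p\times\mathbb{R}^m$); $M=\begin{bmatrix}G&0&0\\0&H+\frac{(\tau-\tau\theta+\theta)\beta}{\tau+\theta}B^*B&-\frac{\tau}{\tau+\theta}B^*\\0&-\frac{\tau}{\tau+\theta}B&\frac{1}{(\tau+\theta)\beta}I\end{bmatrix}$. *)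

theory Defs
  imports "HOL-Analysis.Analysis" "HOL-Library.Extended_Real"
begin

definition proper_fun :: "('a::real_inner \<Rightarrow> ereal) \<Rightarrow> bool" where
  "proper_fun f \<longleftrightarrow> (\<forall>x. f x \<noteq> -\<infinity>) \<and> (\<exists>x. f x < \<infinity>)"

definition convex_fun :: "('a::real_inner \<Rightarrow> ereal) \<Rightarrow> bool" where
  "convex_fun f \<longleftrightarrow> (\<forall>x y (t::real). 0 \<le> t \<and> t \<le> 1 \<longrightarrow>
      f ((1 - t) *\<^sub>R x + t *\<^sub>R y) \<le> ereal (1 - t) * f x + ereal t * f y)"

text \<open>Closed = lower semicontinuous = closed epigraph.\<close>
definition closed_fun :: "('a::real_inner \<Rightarrow> ereal) \<Rightarrow> bool" where
  "closed_fun f \<longleftrightarrow> closed {(x, t::real). f x \<le> ereal t}"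

text \<open>Subdifferential (empty outside the effective domain).\<close>
definition subdiff :: "('a::real_inner \<Rightarrow> ereal) \<Rightarrow> 'a \<Rightarrow> 'a set" where
  "subdiff f x = {v. f x < \<infinity> \<and> (\<forall>y. f x + ereal (v \<bullet> (y - x)) \<le> f y)}"

definition qnorm2 :: "real^'n^'n \<Rightarrow> real^'n \<Rightarrow> real" where
  "qnorm2 Q z = (Q *v z) \<bullet> z"

definition sym_pd :: "real^'n^'n \<Rightarrow> bool" where
  "sym_pd Q \<longleftrightarrow> transpose Q = Q \<and> (\<forall>z. z \<noteq> 0 \<longrightarrow> (Q *v z) \<bullet> z > 0)"

definition sym_psd :: "real^'n^'n \<Rightarrow> bool" where
  "sym_psd Q \<longleftrightarrow> transpose Q = Q \<and> (\<forall>z. (Q *v z) \<bullet> z \<ge> 0)"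

definition region_R :: "real \<Rightarrow> real \<Rightarrow> real \<Rightarrow> bool" where
  "region_R s \<tau> \<theta> \<longleftrightarrow> -1 < \<tau> \<and> \<tau> < 1 - s \<and> \<tau> + \<theta> > 0 \<and>
     (1 - \<tau>\<^sup>2) * (2 - \<tau> - \<theta> - s) - (1 - \<theta>)\<^sup>2 * (1 - \<tau> - s) > 0"

definition T_op :: "(real^'n \<Rightarrow> ereal) \<Rightarrow> (real^'p \<Rightarrow> ereal) \<Rightarrow> real^'n^'m \<Rightarrow> real^'p^'m
     \<Rightarrow> real^'m \<Rightarrow> (real^'n) \<times> (real^'p) \<times> (real^'m) \<Rightarrow> ((real^'n) \<times> (real^'p) \<times> (real^'m)) set" where
  "T_op f g A B b z = (case z of (x, y, \<gamma>) \<Rightarrow>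
     {(v - transpose A *v \<gamma>, w - transpose B *v \<gamma>, A *v x + B *v y - b) | v w.
        v \<in> subdiff f x \<and> w \<in> subdiff g y})"

definition M_op :: "real^'n^'n \<Rightarrow> real^'p^'p \<Rightarrow> real^'p^'m \<Rightarrow> real \<Rightarrow> real \<Rightarrow> real
     \<Rightarrow> (real^'n) \<times> (real^'p) \<times> (real^'m) \<Rightarrow> (real^'n) \<times> (real^'p) \<times> (real^'m)" where
  "M_op G H B \<beta> \<tau> \<theta> z = (case z of (x, y, \<gamma>) \<Rightarrow>
     (G *v x,
      (H + ((\<tau> - \<tau> * \<theta> + \<theta>) * \<beta> / (\<tau> + \<theta>)) *\<^sub>R (transpose B ** B)) *v y
        - (\<tau> / (\<tau> + \<theta>)) *\<^sub>R (transpose B *v \<gamma>),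
      - (\<tau> / (\<tau> + \<theta>)) *\<^sub>R (B *v y) + (1 / ((\<tau> + \<theta>) * \<beta>)) *\<^sub>R \<gamma>))"

end

theory Submission
  imports Defs
begin

text \<open>
  The three relations are the optimality conditions of the two subproblems, rewritten through
  the multiplier updates. The first is the definition of \<open>x\<^sub>k\<close>, as \<open>G (x\<^sub>k\<^sub>-\<^sub>1 - x\<^sub>k) = u\<^sub>k\<close>.
  For the second, the \<open>y\<close>-subproblem minimises \<open>g\<close> plus a quadratic \<open>q\<close>; comparing \<open>y\<^sub>k\<close> with
  the points \<open>y\<^sub>k + t (w - y\<^sub>k)\<close>, using convexity of \<open>g\<close> and letting \<open>t \<rightarrow> 0\<close> gives
  \<open>-\<nabla>q(y\<^sub>k) \<in> \<partial>g(y\<^sub>k)\<close>. Finally, with \<open>R = A xt\<^sub>k + B y\<^sub>k - b\<close> and \<open>P = B (y\<^sub>k\<^sub>-\<^sub>1 - y\<^sub>k)\<close>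
  every multiplier is affine in \<open>R\<close> and \<open>P\<close>, e.g. \<open>\<gamma>\<^sub>k\<^sub>-\<^sub>1 - \<gamma>\<^sub>k = (\<tau> + \<theta>) \<beta> R + \<tau> \<beta> P\<close>, so the
  remaining identities reduce to scalar identities in \<open>\<tau>\<close>, \<open>\<theta>\<close> and \<open>\<beta>\<close>.
\<close>

lemma sym_pd_invertible:
  fixes G :: "real^'n^'n"
  assumes "sym_pd G"
  shows "invertible G"
proof -
  have "\<forall>z. G *v z = 0 \<longrightarrow> z = 0"
    using assms unfolding sym_pd_def by (metis inner_zero_left less_irrefl)
  then show ?thesis
    by (simp add: invertible_left_inverse matrix_left_invertible_ker)
qed

lemma matrix_inv_right_apply:
  fixes G :: "'a::semiring_1^'n^'m"
  assumes "invertible G"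
  shows "G *v (matrix_inv G *v u) = u"
proof -
  have "G ** matrix_inv G = mat 1"
    using assms unfolding invertible_def matrix_inv_def by (rule someI2_ex) auto
  then show ?thesis by (metis matrix_vector_mul_assoc matrix_vector_mul_lid)
qed

lemma le_of_le_add_mult_pos:
  fixes a b c :: real
  assumes "\<And>t. 0 < t \<Longrightarrow> t \<le> 1 \<Longrightarrow> a \<le> b + t * c"
  shows "a \<le> b"
proof (rule tendsto_lowerbound)
  show "((\<lambda>t. b + t * c) \<longlongrightarrow> b) (at_right 0)"
    by (auto intro!: tendsto_eq_intros)
  show "\<forall>\<^sub>F t in at_right 0. a \<le> b + t * c"
    by (rule eventually_mono[OF eventually_at_right_real[of 0 1]]) (auto intro: assms)
qed simp

lemma qnorm2_add_scaleR:
  fixes H :: "real^'n^'n"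
  assumes "transpose H = H"
  shows "qnorm2 H (a + t *\<^sub>R e) = qnorm2 H a + 2 * t * ((H *v a) \<bullet> e) + t\<^sup>2 * qnorm2 H e"
proof -
  have "(H *v e) \<bullet> a = (H *v a) \<bullet> e"
    by (metis assms dot_lmul_matrix inner_commute transpose_matrix_vector)
  then show ?thesis
    unfolding qnorm2_def
    by (simp add: matrix_vector_right_distrib matrix_vector_mult_scaleR inner_add_left
        inner_add_right algebra_simps power2_eq_square)
qed

lemma power2_norm_add_scaleR:
  fixes a e :: "'a::real_inner"
  shows "(norm (a + t *\<^sub>R e))\<^sup>2 = (norm a)\<^sup>2 + 2 * t * (a \<bullet> e) + t\<^sup>2 * (norm e)\<^sup>2"
  unfolding power2_norm_eq_inner
  by (simp add: inner_add_left inner_add_right inner_commute[of e a] algebra_simps power2_eq_square)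

lemma convex_fun_along_segment:
  fixes g :: "'a::real_inner \<Rightarrow> ereal"
  assumes "convex_fun g" "g y = ereal a" "g w = ereal b" "0 \<le> t" "t \<le> 1"
  shows "g (y + t *\<^sub>R (w - y)) \<le> ereal ((1 - t) * a + t * b)"
proof -
  have "y + t *\<^sub>R (w - y) = (1 - t) *\<^sub>R y + t *\<^sub>R w"
    by (simp add: algebra_simps)
  then show ?thesis
    using assms unfolding convex_fun_def by (metis times_ereal.simps(1) plus_ereal.simps(1))
qed

lemma subdiff_minimizer_add_quadratic:
  fixes g :: "'a::real_inner \<Rightarrow> ereal" and q :: "'a \<Rightarrow> real"
  assumes proper: "proper_fun g" and convex: "convex_fun g"
    and minimizer: "\<And>w. g y + ereal (q y) \<le> g w + ereal (q w)"
    and expansion: "\<And>e t. q (y + t *\<^sub>R e) = q y + t * (v \<bullet> e) + t\<^sup>2 * c e"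
  shows "- v \<in> subdiff g y"
proof -
  have finite: "g z \<noteq> \<infinity> \<Longrightarrow> \<exists>r. g z = ereal r" for z
    using proper unfolding proper_fun_def by (cases "g z") auto
  obtain w0 where "g w0 < \<infinity>"
    using proper unfolding proper_fun_def by auto
  then have "g y \<noteq> \<infinity>"
    using minimizer[of w0] by auto
  then obtain a where a: "g y = ereal a"
    using finite by blast
  have "g y + ereal (- v \<bullet> (w - y)) \<le> g w" for w
  proof (cases "g w = \<infinity>")
    case False
    then obtain b where b: "g w = ereal b"
      using finite by blast
    have "a \<le> b + v \<bullet> (w - y) + t * c (w - y)" if t: "0 < t" "t \<le> 1" for t
    proof -
      let ?z = "y + t *\<^sub>R (w - y)"
      have "ereal (a + q y) \<le> g ?z + ereal (q ?z)"
        using minimizer[of ?z] by (simp add: a)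
      also have "\<dots> \<le> ereal ((1 - t) * a + t * b) + ereal (q ?z)"
        using convex_fun_along_segment[OF convex a b] t by (intro add_right_mono) auto
      finally have "t * a \<le> t * (b + v \<bullet> (w - y) + t * c (w - y))"
        unfolding expansion by (simp add: algebra_simps power2_eq_square)
      then show ?thesis
        using t by simp
    qed
    then have "a \<le> b + v \<bullet> (w - y)"
      by (rule le_of_le_add_mult_pos)
    then show ?thesis
      by (simp add: a b)
  qed simp
  then show ?thesis
    unfolding subdiff_def using a by auto
qed

lemma prox_augmented_lagrangian_expansion:
  fixes B :: "real^'p^'m" and H :: "real^'p^'p" and a b p :: "real^'m" and w0 :: "real^'p"
    and \<beta> :: real
  assumes "transpose H = H"
  defines "q \<equiv> \<lambda>w. - (p \<bullet> (B *v w)) + \<beta> / 2 * (norm (a + B *v w - b))\<^sup>2 + 1/2 * qnorm2 H (w - w0)"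
  shows "q (y + t *\<^sub>R e) = q y
           + t * ((transpose B *v (\<beta> *\<^sub>R (a + B *v y - b) - p) + H *v (y - w0)) \<bullet> e)
           + t\<^sup>2 * (\<beta> / 2 * (norm (B *v e))\<^sup>2 + 1/2 * qnorm2 H e)"
proof -
  let ?r = "a + B *v y - b"
  have residual: "a + B *v (y + t *\<^sub>R e) - b = ?r + t *\<^sub>R (B *v e)"
    by (simp add: matrix_vector_right_distrib matrix_vector_mult_scaleR algebra_simps)
  have shift: "y + t *\<^sub>R e - w0 = (y - w0) + t *\<^sub>R e"
    by simp
  have "q (y + t *\<^sub>R e) = - (p \<bullet> (B *v y)) - t * (p \<bullet> (B *v e))
      + \<beta> / 2 * ((norm ?r)\<^sup>2 + 2 * t * (?r \<bullet> (B *v e)) + t\<^sup>2 * (norm (B *v e))\<^sup>2)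
      + 1/2 * (qnorm2 H (y - w0) + 2 * t * ((H *v (y - w0)) \<bullet> e) + t\<^sup>2 * qnorm2 H e)"
    unfolding q_def residual shift power2_norm_add_scaleR qnorm2_add_scaleR[OF assms(1)]
    by (simp add: matrix_vector_right_distrib matrix_vector_mult_scaleR inner_add_right)
  then show ?thesis
    unfolding q_def
    by (simp add: dot_lmul_matrix inner_add_left inner_diff_left algebra_simps)
qed

lemma prox_augmented_lagrangian_step_subdiff:
  fixes g :: "real^'p \<Rightarrow> ereal" and B :: "real^'p^'m" and H :: "real^'p^'p"
  assumes "proper_fun g" "convex_fun g" "transpose H = H"
    and "\<And>w. g y + ereal (- (p \<bullet> (B *v y)) + \<beta> / 2 * (norm (a + B *v y - b))\<^sup>2 + 1/2 * qnorm2 H (y - w0))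
          \<le> g w + ereal (- (p \<bullet> (B *v w)) + \<beta> / 2 * (norm (a + B *v w - b))\<^sup>2 + 1/2 * qnorm2 H (w - w0))"
  shows "- (transpose B *v (\<beta> *\<^sub>R (a + B *v y - b) - p) + H *v (y - w0)) \<in> subdiff g y"
  using assms(1,2,4) prox_augmented_lagrangian_expansion[OF assms(3)]
  by (rule subdiff_minimizer_add_quadratic)

lemma symmetric_multiplier_identities:
  fixes \<gamma>0 \<gamma>t \<gamma>h \<gamma>1 R P :: "'a::real_vector"
  assumes "\<tau> + \<theta> \<noteq> 0" "\<beta> \<noteq> 0"
    and \<gamma>t: "\<gamma>t = \<gamma>0 - \<beta> *\<^sub>R (R + P)"
    and \<gamma>h: "\<gamma>h = \<gamma>0 - (\<tau> * \<beta>) *\<^sub>R (R + P)"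
    and \<gamma>1: "\<gamma>1 = \<gamma>h - (\<theta> * \<beta>) *\<^sub>R R"
  shows "- (\<tau> / (\<tau> + \<theta>)) *\<^sub>R P + (1 / ((\<tau> + \<theta>) * \<beta>)) *\<^sub>R (\<gamma>0 - \<gamma>1) = R"
    and "((\<tau> - \<tau> * \<theta> + \<theta>) * \<beta> / (\<tau> + \<theta>)) *\<^sub>R P - (\<tau> / (\<tau> + \<theta>)) *\<^sub>R (\<gamma>0 - \<gamma>1)
           = \<gamma>h - \<beta> *\<^sub>R R - \<gamma>t"
proof -
  have step: "\<gamma>0 - \<gamma>1 = ((\<tau> + \<theta>) * \<beta>) *\<^sub>R R + (\<tau> * \<beta>) *\<^sub>R P"
    unfolding \<gamma>1 \<gamma>h by (simp add: algebra_simps)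
  show "- (\<tau> / (\<tau> + \<theta>)) *\<^sub>R P + (1 / ((\<tau> + \<theta>) * \<beta>)) *\<^sub>R (\<gamma>0 - \<gamma>1) = R"
  proof -
    have "1 / ((\<tau> + \<theta>) * \<beta>) * ((\<tau> + \<theta>) * \<beta>) = 1"
      and "1 / ((\<tau> + \<theta>) * \<beta>) * (\<tau> * \<beta>) = \<tau> / (\<tau> + \<theta>)"
      using assms(1,2) by simp_all
    then show ?thesis
      unfolding step by (simp add: scaleR_add_right)
  qed
  let ?c = "(\<tau> - \<tau> * \<theta> + \<theta>) * \<beta> / (\<tau> + \<theta>)"
  have coeff_P: "?c - \<tau> / (\<tau> + \<theta>) * (\<tau> * \<beta>) = (1 - \<tau>) * \<beta>"
  proof -
    have "(\<tau> - \<tau> * \<theta> + \<theta>) * \<beta> - \<tau> * (\<tau> * \<beta>) = (1 - \<tau>) * \<beta> * (\<tau> + \<theta>)"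
      by (simp add: algebra_simps)
    then show ?thesis
      using assms(1) by (simp add: diff_divide_distrib[symmetric])
  qed
  have coeff_R: "\<tau> / (\<tau> + \<theta>) * ((\<tau> + \<theta>) * \<beta>) = \<tau> * \<beta>"
    using assms(1) by simp
  have "?c *\<^sub>R P - (\<tau> / (\<tau> + \<theta>)) *\<^sub>R (\<gamma>0 - \<gamma>1)
      = (?c - \<tau> / (\<tau> + \<theta>) * (\<tau> * \<beta>)) *\<^sub>R P - (\<tau> / (\<tau> + \<theta>) * ((\<tau> + \<theta>) * \<beta>)) *\<^sub>R R"
    unfolding step by (simp add: scaleR_add_right scaleR_diff_left)
  also have "\<dots> = ((1 - \<tau>) * \<beta>) *\<^sub>R P - (\<tau> * \<beta>) *\<^sub>R R"
    unfolding coeff_P coeff_R ..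
  also have "\<dots> = \<gamma>h - \<beta> *\<^sub>R R - \<gamma>t"
    unfolding \<gamma>t \<gamma>h by (simp add: algebra_simps)
  finally show "?c *\<^sub>R P - (\<tau> / (\<tau> + \<theta>)) *\<^sub>R (\<gamma>0 - \<gamma>1) = \<gamma>h - \<beta> *\<^sub>R R - \<gamma>t" .
qed

lemma add_scaleR_gram_matrix_vector_mult:
  fixes B :: "real^'p^'m" and H :: "real^'p^'p"
  shows "(H + c *\<^sub>R (transpose B ** B)) *v d - s *\<^sub>R (transpose B *v z)
       = H *v d + transpose B *v (c *\<^sub>R (B *v d) - s *\<^sub>R z)"
  by (simp add: matrix_vector_mult_add_rdistrib scaleR_matrix_vector_assoc[symmetric]
      matrix_vector_mul_assoc matrix_vector_right_distrib matrix_vector_mult_diff_distrib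
      matrix_vector_mult_scaleR del: transpose_matrix_vector)

theorem theorem2p3:
  fixes f :: "real^'n \<Rightarrow> ereal" and g :: "real^'p \<Rightarrow> ereal"
    and A :: "real^'n^'m" and B :: "real^'p^'m" and b :: "real^'m"
    and G :: "real^'n^'n" and H :: "real^'p^'p"
    and \<beta> \<sigma>t \<sigma>h \<tau> \<theta> :: real
    and x :: "nat \<Rightarrow> real^'n" and y :: "nat \<Rightarrow> real^'p" and \<gamma> :: "nat \<Rightarrow> real^'m"
    and xt :: "nat \<Rightarrow> real^'n" and u :: "nat \<Rightarrow> real^'n" and \<gamma>t :: "nat \<Rightarrow> real^'m"
    and \<gamma>h :: "nat \<Rightarrow> real^'m"
  assumes f: "proper_fun f" "closed_fun f" "convex_fun f"
    and g: "proper_fun g" "closed_fun g" "convex_fun g"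
    and sol: "\<exists>xs ys gs. transpose A *v gs \<in> subdiff f xs \<and> transpose B *v gs \<in> subdiff g ys
                 \<and> A *v xs + B *v ys - b = 0"
    and \<beta>: "\<beta> > 0"
    and \<sigma>t: "0 \<le> \<sigma>t" "\<sigma>t < 1" and \<sigma>h: "0 \<le> \<sigma>h" "\<sigma>h < 1"
    and G: "sym_pd G" and H: "sym_psd H"
    and reg: "region_R \<sigma>t \<tau> \<theta>"
    and gt: "\<And>k. k \<ge> 1 \<Longrightarrow> \<gamma>t k = \<gamma> (k-1) - \<beta> *\<^sub>R (A *v xt k + B *v y (k-1) - b)"
    and u: "\<And>k. k \<ge> 1 \<Longrightarrow> u k \<in> (\<lambda>v. v - transpose A *v \<gamma>t k) ` subdiff f (xt k)"
    and inex: "\<And>k. k \<ge> 1 \<Longrightarrow>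
        qnorm2 G (xt k - x (k-1) + matrix_inv G *v u k)
          \<le> \<sigma>t / \<beta> * (norm (\<gamma>t k - \<gamma> (k-1)))\<^sup>2 + \<sigma>h * qnorm2 G (xt k - x (k-1))"
    and gh: "\<And>k. k \<ge> 1 \<Longrightarrow> \<gamma>h k = \<gamma> (k-1) - (\<tau> * \<beta>) *\<^sub>R (A *v xt k + B *v y (k-1) - b)"
    and ymin: "\<And>k w. k \<ge> 1 \<Longrightarrow>
        g (y k) + ereal (- (\<gamma>h k \<bullet> (B *v y k)) + \<beta> / 2 * (norm (A *v xt k + B *v y k - b))\<^sup>2
                         + 1/2 * qnorm2 H (y k - y (k-1)))
        \<le> g w + ereal (- (\<gamma>h k \<bullet> (B *v w)) + \<beta> / 2 * (norm (A *v xt k + B *v w - b))\<^sup>2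
                         + 1/2 * qnorm2 H (w - y (k-1)))"
    and xk: "\<And>k. k \<ge> 1 \<Longrightarrow> x k = x (k-1) - matrix_inv G *v u k"
    and gk: "\<And>k. k \<ge> 1 \<Longrightarrow> \<gamma> k = \<gamma>h k - (\<theta> * \<beta>) *\<^sub>R (A *v xt k + B *v y k - b)"
    and k: "k \<ge> 1"
  shows "G *v (x (k-1) - x k) \<in> (\<lambda>v. v - transpose A *v \<gamma>t k) ` subdiff f (xt k)
       \<and> (H + ((\<tau> - \<tau> * \<theta> + \<theta>) * \<beta> / (\<tau> + \<theta>)) *\<^sub>R (transpose B ** B)) *v (y (k-1) - y k)
           - (\<tau> / (\<tau> + \<theta>)) *\<^sub>R (transpose B *v (\<gamma> (k-1) - \<gamma> k))
           \<in> (\<lambda>w. w - transpose B *v \<gamma>t k) ` subdiff g (y k)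
       \<and> - (\<tau> / (\<tau> + \<theta>)) *\<^sub>R (B *v (y (k-1) - y k)) + (1 / ((\<tau> + \<theta>) * \<beta>)) *\<^sub>R (\<gamma> (k-1) - \<gamma> k)
           = A *v xt k + B *v y k - b
       \<and> M_op G H B \<beta> \<tau> \<theta> ((x (k-1), y (k-1), \<gamma> (k-1)) - (x k, y k, \<gamma> k))
           \<in> T_op f g A B b (xt k, y k, \<gamma>t k)"
proof -
  let ?c = "(\<tau> - \<tau> * \<theta> + \<theta>) * \<beta> / (\<tau> + \<theta>)" and ?s = "\<tau> / (\<tau> + \<theta>)"
  define R where "R = A *v xt k + B *v y k - b"
  define P where "P = B *v (y (k-1) - y k)"
  have "A *v xt k + B *v y (k-1) - b = R + P"
    by (simp add: R_def P_def matrix_vector_mult_diff_distrib)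
  then have multipliers: "\<gamma>t k = \<gamma> (k-1) - \<beta> *\<^sub>R (R + P)"
      "\<gamma>h k = \<gamma> (k-1) - (\<tau> * \<beta>) *\<^sub>R (R + P)" "\<gamma> k = \<gamma>h k - (\<theta> * \<beta>) *\<^sub>R R"
    using gt[OF k] gh[OF k] gk[OF k] by (simp_all add: R_def)
  have "\<tau> + \<theta> \<noteq> 0" "\<beta> \<noteq> 0"
    using reg \<beta> unfolding region_R_def by auto
  note identities = symmetric_multiplier_identities[OF this multipliers]
  have x_part: "G *v (x (k-1) - x k) \<in> (\<lambda>v. v - transpose A *v \<gamma>t k) ` subdiff f (xt k)"
    using xk[OF k] u[OF k] matrix_inv_right_apply[OF sym_pd_invertible[OF G]] by simp
  have residual_part: "- ?s *\<^sub>R (B *v (y (k-1) - y k)) + (1 / ((\<tau> + \<theta>) * \<beta>)) *\<^sub>R (\<gamma> (k-1) - \<gamma> k)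
      = A *v xt k + B *v y k - b"
    using identities(1) unfolding R_def P_def .
  have "- (transpose B *v (\<beta> *\<^sub>R R - \<gamma>h k) + H *v (y k - y (k-1))) \<in> subdiff g (y k)"
    using prox_augmented_lagrangian_step_subdiff[OF g(1) g(3) _ ymin[OF k]] H
    unfolding sym_psd_def R_def by blast
  moreover have "(H + ?c *\<^sub>R (transpose B ** B)) *v (y (k-1) - y k) - ?s *\<^sub>R (transpose B *v (\<gamma> (k-1) - \<gamma> k))
      = - (transpose B *v (\<beta> *\<^sub>R R - \<gamma>h k) + H *v (y k - y (k-1))) - transpose B *v \<gamma>t k"
    unfolding add_scaleR_gram_matrix_vector_mult P_def[symmetric] identities(2)
    by (simp add: matrix_vector_right_distrib matrix_vector_mult_diff_distrib
        matrix_vector_mult_scaleR algebra_simps del: transpose_matrix_vector)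
  ultimately have y_part: "(H + ?c *\<^sub>R (transpose B ** B)) *v (y (k-1) - y k)
      - ?s *\<^sub>R (transpose B *v (\<gamma> (k-1) - \<gamma> k)) \<in> (\<lambda>w. w - transpose B *v \<gamma>t k) ` subdiff g (y k)"
    by simp
  show ?thesis
    using x_part y_part residual_part unfolding M_op_def T_op_def by auto
qed

end
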